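(* Let $G$ be a finite stochastic game satisfying the standing assumptions below. Consider the sequence generated by the outer loop of policy iteration with fictitious play (PI-FP): start from an arbitrary assignment $V^0 : Q_{NT}\times N\to\mathbb{R}$ of values to all players at all nonterminal states; for $n=1,2,\dots$, let $s^n$ be a stationary strategy profile such that for every nonterminal state $q$, the mixed profile $s^n(q)$ is a Nash equilibrium of the stage game $\Gamma_q(V^{n-1})$; then let $V^n = V^{s^n}$, the vector of expected total payoffs of $s^n$ from each nonterminal state. If the sequence $(s^n)_{n\ge 1}$ converges to a stationary profile $s^*$, then $s^*$ is a Nash equilibrium of $G$ (no player can increase its expected total payoff from any state by unilaterally deviating to any strategy, stationary or not).
   Context: A finite stochastic game consists of a finite set $N$ of players, a finite set $Q$ of states partitioned into nonterminal states $Q_{NT}$ and absorbing terminal states $Q_T$, finite action sets $A_i$ for each player $i$, and transition probabilities $P(q,a,\hat q)$ for $q\in Q_{NT}$, action profiles $a\in A=\prod_i A_i$ and $\hat q\in Q$. Each terminal state $t\in Q_T$ gives each player $i$ a payoff $u_i(t)\in\mathbb{R}$, and there are no other rewards; a player's payoff is the (undiscounted) payoff received at the terminal state reached. Standing assumption: there is a finite $T$ such that, regardless of the actions chosen, play started at any nonterminal state reaches a terminal state within at most $T$ stages (as in the hostility game, where every action has positive hostility level and the state is the cumulative hostility, which terminates once a threshold is reached). A stationary strategy for player $i$ assigns to each nonterminal state a probability distribution over $A_i$. For a stationary profile $s$, $V^s_i(q)$ denotes player $i$'s expected terminal payoff when play starts at $q$ and all players follow $s$ (with $V^s_i(t)=u_i(t)$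 for terminal $t$); it is the unique solution of $V_i(q)=\sum_{a}s(q)(a)\sum_{\hat q}P(q,a,\hat q)V_i(\hat q)$. Given values $V:Q_{NT}\times N\to\mathbb{R}$ (extended by $V_i(t)=u_i(t)$ on terminal states), the stage game $\Gamma_q(V)$ at nonterminal state $q$ is the one-shot normal-form game with action sets $A_i$ and payoffs $\sum_{\hat q}P(q,a,\hat q)V_i(\hat q)$ to player $i$ under action profile $a$. *)

theory Defs
  imports "HOL-Probability.Probability_Mass_Function" "HOL-Library.FuncSet"
begin

text \<open>A finite stochastic game with terminal payoffs. Players 'i, states 'q, actions 'a.\<close>

record ('i, 'q, 'a) sgame =
  players :: "'i set"
  nonterm_states :: "'q set"
  term_states :: "'q set"
  acts :: "'i \<Rightarrow> 'a set"
  trans :: "'q \<Rightarrow> ('i \<Rightarrow> 'a) \<Rightarrow> 'q \<Rightarrow> real"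
  util :: "'q \<Rightarrow> 'i \<Rightarrow> real"

definition states :: "('i, 'q, 'a) sgame \<Rightarrow> 'q set" where
  "states G = nonterm_states G \<union> term_states G"

definition profiles :: "('i, 'q, 'a) sgame \<Rightarrow> ('i \<Rightarrow> 'a) set" where
  "profiles G = PiE (players G) (acts G)"

definition step :: "('i, 'q, 'a) sgame \<Rightarrow> 'q \<Rightarrow> 'q \<Rightarrow> bool" where
  "step G q q' \<longleftrightarrow> q \<in> nonterm_states G \<and> (\<exists>a\<in>profiles G. trans G q a q' > 0)"

text \<open>Standing assumptions: finiteness, transition probabilities, and termination
  within at most T stages regardless of the actions chosen (no path of positive-probability
  transitions visits T+1 nonterminal states).\<close>
definition finite_sgame :: "('i, 'q, 'a) sgame \<Rightarrow> bool" where
  "finite_sgame G \<longleftrightarrow>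
     finite (players G) \<and> finite (nonterm_states G) \<and> finite (term_states G) \<and>
     nonterm_states G \<inter> term_states G = {} \<and>
     (\<forall>i\<in>players G. finite (acts G i) \<and> acts G i \<noteq> {}) \<and>
     (\<forall>q\<in>nonterm_states G. \<forall>a\<in>profiles G.
        (\<forall>q'. trans G q a q' \<ge> 0) \<and> (\<forall>q'. q' \<notin> states G \<longrightarrow> trans G q a q' = 0) \<and>
        (\<Sum>q'\<in>states G. trans G q a q') = 1) \<and>
     (\<exists>T::nat. \<forall>f::nat \<Rightarrow> 'q. f 0 \<in> nonterm_states G \<longrightarrow>
        \<not> (\<forall>k<T. step G (f k) (f (Suc k)) \<and> f (Suc k) \<in> nonterm_states G))"

definition prof_prob :: "('i, 'q, 'a) sgame \<Rightarrow> ('i \<Rightarrow> 'a pmf) \<Rightarrow> ('i \<Rightarrow> 'a) \<Rightarrow> real" where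
  "prof_prob G x a = (\<Prod>j\<in>players G. pmf (x j) (a j))"

definition valid_mixed :: "('i, 'q, 'a) sgame \<Rightarrow> 'i \<Rightarrow> 'a pmf \<Rightarrow> bool" where
  "valid_mixed G i y \<longleftrightarrow> set_pmf y \<subseteq> acts G i"

definition stationary_profile :: "('i, 'q, 'a) sgame \<Rightarrow> ('i \<Rightarrow> 'q \<Rightarrow> 'a pmf) \<Rightarrow> bool" where
  "stationary_profile G s \<longleftrightarrow>
     (\<forall>i\<in>players G. \<forall>q\<in>nonterm_states G. valid_mixed G i (s i q))"

text \<open>V^s: the unique solution of the value equations, with V_i(t) = u_i(t) on terminal states
  (and, for definiteness, 0 outside the state set).\<close>
definition stat_value :: "('i, 'q, 'a) sgame \<Rightarrow> ('i \<Rightarrow> 'q \<Rightarrow> 'a pmf) \<Rightarrow> 'q \<Rightarrow> 'i \<Rightarrow> real" where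
  "stat_value G s = (THE V.
      (\<forall>q\<in>term_states G. \<forall>i. V q i = util G q i) \<and>
      (\<forall>q\<in>nonterm_states G. \<forall>i. V q i =
          (\<Sum>a\<in>profiles G. prof_prob G (\<lambda>j. s j q) a * (\<Sum>q'\<in>states G. trans G q a q' * V q' i))) \<and>
      (\<forall>q. q \<notin> states G \<longrightarrow> (\<forall>i. V q i = 0)))"

definition ext_val :: "('i, 'q, 'a) sgame \<Rightarrow> ('q \<Rightarrow> 'i \<Rightarrow> real) \<Rightarrow> 'q \<Rightarrow> 'i \<Rightarrow> real" where
  "ext_val G V q i = (if q \<in> term_states G then util G q i else V q i)"

definition stage_util :: "('i, 'q, 'a) sgame \<Rightarrow> ('q \<Rightarrow> 'i \<Rightarrow> real) \<Rightarrow> 'q \<Rightarrow> ('i \<Rightarrow> 'a pmf) \<Rightarrow> 'i \<Rightarrow> real" where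
  "stage_util G V q x i =
     (\<Sum>a\<in>profiles G. prof_prob G x a * (\<Sum>q'\<in>states G. trans G q a q' * ext_val G V q' i))"

definition stage_nash :: "('i, 'q, 'a) sgame \<Rightarrow> ('q \<Rightarrow> 'i \<Rightarrow> real) \<Rightarrow> 'q \<Rightarrow> ('i \<Rightarrow> 'a pmf) \<Rightarrow> bool" where
  "stage_nash G V q x \<longleftrightarrow>
     (\<forall>i\<in>players G. valid_mixed G i (x i)) \<and>
     (\<forall>i\<in>players G. \<forall>y. valid_mixed G i y \<longrightarrow> stage_util G V q (x(i := y)) i \<le> stage_util G V q x i)"

text \<open>General (history-dependent, behavioural) strategies. A history is the list of past
  (state, action profile) pairs; sigma j h q is player j's mixed action at current state q.\<close>
type_synonym ('i, 'q, 'a) hist = "('q \<times> ('i \<Rightarrow> 'a)) list"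

definition valid_behav :: "('i, 'q, 'a) sgame \<Rightarrow> 'i \<Rightarrow> (('i, 'q, 'a) hist \<Rightarrow> 'q \<Rightarrow> 'a pmf) \<Rightarrow> bool" where
  "valid_behav G i \<tau> \<longleftrightarrow> (\<forall>h. \<forall>q\<in>nonterm_states G. valid_mixed G i (\<tau> h q))"

text \<open>Expected terminal payoff of player i when play is truncated after n stages
  (unterminated play contributes 0), starting at q after history h.\<close>
primrec hpay :: "('i, 'q, 'a) sgame \<Rightarrow> ('i \<Rightarrow> ('i, 'q, 'a) hist \<Rightarrow> 'q \<Rightarrow> 'a pmf) \<Rightarrow> nat
                   \<Rightarrow> ('i, 'q, 'a) hist \<Rightarrow> 'q \<Rightarrow> 'i \<Rightarrow> real" where
  "hpay G \<sigma> 0 h q i = (if q \<in> term_states G then util G q i else 0)"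
| "hpay G \<sigma> (Suc n) h q i =
     (if q \<in> term_states G then util G q i
      else if q \<in> nonterm_states G then
        (\<Sum>a\<in>profiles G. prof_prob G (\<lambda>j. \<sigma> j h q) a *
            (\<Sum>q'\<in>states G. trans G q a q' * hpay G \<sigma> n (h @ [(q, a)]) q' i))
      else 0)"

definition game_payoff :: "('i, 'q, 'a) sgame \<Rightarrow> ('i \<Rightarrow> ('i, 'q, 'a) hist \<Rightarrow> 'q \<Rightarrow> 'a pmf)
                           \<Rightarrow> 'q \<Rightarrow> 'i \<Rightarrow> real" where
  "game_payoff G \<sigma> q i = lim (\<lambda>n. hpay G \<sigma> n [] q i)"

definition stat_embed :: "('i \<Rightarrow> 'q \<Rightarrow> 'a pmf) \<Rightarrow> 'i \<Rightarrow> ('i, 'q, 'a) hist \<Rightarrow> 'q \<Rightarrow> 'a pmf" where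
  "stat_embed s = (\<lambda>i h q. s i q)"

definition game_nash :: "('i, 'q, 'a) sgame \<Rightarrow> ('i \<Rightarrow> 'q \<Rightarrow> 'a pmf) \<Rightarrow> bool" where
  "game_nash G s \<longleftrightarrow> stationary_profile G s \<and>
     (\<forall>i\<in>players G. \<forall>\<tau>. valid_behav G i \<tau> \<longrightarrow>
        (\<forall>q\<in>nonterm_states G.
           game_payoff G ((stat_embed s)(i := \<tau>)) q i \<le> game_payoff G (stat_embed s) q i))"

end

theory Submission imports Defs begin

text \<open>Since play terminates within a uniform number T of stages, every expected payoff is the
  payoff of play truncated after T stages. This makes the payoff of a stationary profile the unique
  solution of the value equations and a continuous function of the profile. Hence the values V^n
  converge to the payoff W of s*, and the stage-game equilibrium conditions pass to the limit:
  s*(q) is a Nash equilibrium of the stage game at q with continuation values W. As W(q) is also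
  the payoff of s*(q) in that stage game, no one-stage deviation from s* is profitable, and
  backward induction over the remaining horizon shows that then no deviation at all is
  profitable.\<close>

definition terminates_within :: "('i, 'q, 'a) sgame \<Rightarrow> nat \<Rightarrow> 'q \<Rightarrow> bool" where
  "terminates_within G k q \<longleftrightarrow>
     \<not> (\<exists>f. f 0 = q \<and> (\<forall>j<k. step G (f j) (f (Suc j)) \<and> f (Suc j) \<in> nonterm_states G))"

lemma not_terminates_within_0: "\<not> terminates_within G 0 q"
  unfolding terminates_within_def by (auto intro!: exI[of _ "\<lambda>_. q"])

lemma terminates_within_step:
  assumes "terminates_within G (Suc k) q" "step G q q'" "q' \<in> nonterm_states G"
  shows "terminates_within G k q'"
  unfolding terminates_within_def
proof
  assume "\<exists>f. f 0 = q' \<and> (\<forall>j<k. step G (f j) (f (Suc j)) \<and> f (Suc j) \<in> nonterm_states G)"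
  then obtain f where "f 0 = q'" and f: "\<forall>j<k. step G (f j) (f (Suc j)) \<and> f (Suc j) \<in> nonterm_states G"
    by blast
  define g where "g j = (case j of 0 \<Rightarrow> q | Suc j' \<Rightarrow> f j')" for j
  have "\<forall>j<Suc k. step G (g j) (g (Suc j)) \<and> g (Suc j) \<in> nonterm_states G"
    using \<open>f 0 = q'\<close> f assms(2,3) by (auto simp: g_def less_Suc_eq_0_disj)
  moreover have "g 0 = q" by (simp add: g_def)
  ultimately show False using assms(1) unfolding terminates_within_def by blast
qed

lemma finite_sgame_horizon:
  "finite_sgame G \<Longrightarrow> \<exists>T. \<forall>q\<in>nonterm_states G. terminates_within G T q"
  unfolding finite_sgame_def terminates_within_def by blast

lemma finite_sgame_nonterm_induct:
  assumes "finite_sgame G" and "q \<in> nonterm_states G"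
    and step: "\<And>q. q \<in> nonterm_states G \<Longrightarrow>
                 (\<And>q'. step G q q' \<Longrightarrow> q' \<in> nonterm_states G \<Longrightarrow> P q') \<Longrightarrow> P q"
  shows "P q"
proof -
  obtain T where T: "\<forall>q\<in>nonterm_states G. terminates_within G T q"
    using finite_sgame_horizon[OF assms(1)] by blast
  have "\<forall>q\<in>nonterm_states G. terminates_within G k q \<longrightarrow> P q" for k
  proof (induction k)
    case 0
    then show ?case by (simp add: not_terminates_within_0)
  next
    case (Suc k)
    show ?case
    proof (intro ballI impI)
      fix q assume q: "q \<in> nonterm_states G" "terminates_within G (Suc k) q"
      show "P q"
        by (rule step[OF q(1)]) (use Suc.IH terminates_within_step[OF q(2)] in blast)
    qed
  qed
  then show ?thesis using T assms(2) by blast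
qed

lemma finite_sgame_nonterm_term_disjoint:
  "finite_sgame G \<Longrightarrow> nonterm_states G \<inter> term_states G = {}"
  unfolding finite_sgame_def by blast

lemma finite_sgame_trans_nonneg:
  "finite_sgame G \<Longrightarrow> q \<in> nonterm_states G \<Longrightarrow> a \<in> profiles G \<Longrightarrow> trans G q a q' \<ge> 0"
  unfolding finite_sgame_def by blast

lemma ext_val_nonterm:
  "finite_sgame G \<Longrightarrow> q \<in> nonterm_states G \<Longrightarrow> ext_val G V q i = V q i"
  using finite_sgame_nonterm_term_disjoint by (fastforce simp: ext_val_def)

text \<open>A transition sum only sees the positive-probability successors, which are terminal
  states or non-terminal states reachable in one step.\<close>

lemma sum_successors_mono:
  assumes G: "finite_sgame G" and q: "q \<in> nonterm_states G" and a: "a \<in> profiles G"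
    and term_le: "\<And>q'. q' \<in> term_states G \<Longrightarrow> f q' \<le> g q'"
    and nonterm_le: "\<And>q'. q' \<in> nonterm_states G \<Longrightarrow> step G q q' \<Longrightarrow> f q' \<le> g q'"
  shows "(\<Sum>q'\<in>states G. trans G q a q' * f q') \<le> (\<Sum>q'\<in>states G. trans G q a q' * g q')"
proof (rule sum_mono)
  fix q' assume q': "q' \<in> states G"
  have nonneg: "trans G q a q' \<ge> 0" using finite_sgame_trans_nonneg[OF G q a] .
  show "trans G q a q' * f q' \<le> trans G q a q' * g q'"
  proof (cases "trans G q a q' = 0")
    case False
    then have "f q' \<le> g q'"
      using q' term_le nonterm_le[of q'] q a nonneg unfolding states_def step_def by force
    then show ?thesis using nonneg by (rule mult_left_mono)
  qed simp
qed

lemma sum_successors_cong: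
  assumes "finite_sgame G" "q \<in> nonterm_states G" "a \<in> profiles G"
    and "\<And>q'. q' \<in> term_states G \<Longrightarrow> f q' = g q'"
    and "\<And>q'. q' \<in> nonterm_states G \<Longrightarrow> step G q q' \<Longrightarrow> f q' = g q'"
  shows "(\<Sum>q'\<in>states G. trans G q a q' * f q') = (\<Sum>q'\<in>states G. trans G q a q' * g q')"
  using sum_successors_mono[of G q a f g] sum_successors_mono[of G q a g f] assms
  by (simp add: order_antisym)

lemma prof_prob_nonneg: "prof_prob G x a \<ge> 0"
  unfolding prof_prob_def by (simp add: prod_nonneg)

lemma tendsto_prof_prob:
  assumes "\<And>j b. j \<in> players G \<Longrightarrow> (\<lambda>n. pmf (x n j) b) \<longlonglongrightarrow> pmf (y j) b"
  shows "(\<lambda>n. prof_prob G (x n) a) \<longlonglongrightarrow> prof_prob G y a"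
  unfolding prof_prob_def by (intro tendsto_prod) (use assms in auto)

lemma hpay_term: "q \<in> term_states G \<Longrightarrow> hpay G \<sigma> n h q i = util G q i"
  by (cases n) auto

lemma hpay_stable:
  assumes G: "finite_sgame G"
  shows "q \<in> nonterm_states G \<Longrightarrow> terminates_within G k q \<Longrightarrow>
           hpay G \<sigma> (k + m) h q i = hpay G \<sigma> k h q i"
proof (induction k arbitrary: q h)
  case 0
  then show ?case by (simp add: not_terminates_within_0)
next
  case (Suc k)
  have "q \<notin> term_states G" using Suc.prems(1) finite_sgame_nonterm_term_disjoint[OF G] by blast
  moreover have "(\<Sum>q'\<in>states G. trans G q a q' * hpay G \<sigma> (k + m) (h @ [(q, a)]) q' i)
      = (\<Sum>q'\<in>states G. trans G q a q' * hpay G \<sigma> k (h @ [(q, a)]) q' i)"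
    if "a \<in> profiles G" for a
    using that Suc.IH terminates_within_step[OF Suc.prems(2)]
    by (intro sum_successors_cong[OF G Suc.prems(1)]) (auto simp: hpay_term)
  ultimately show ?case using Suc.prems(1) by simp
qed

lemma game_payoff_eq_hpay:
  assumes "finite_sgame G" "q \<in> nonterm_states G" "terminates_within G k q"
  shows "game_payoff G \<sigma> q i = hpay G \<sigma> k [] q i"
proof -
  have "(\<lambda>n. hpay G \<sigma> (n + k) [] q i) \<longlonglongrightarrow> hpay G \<sigma> k [] q i"
    using hpay_stable[OF assms] by (simp add: add.commute)
  then show ?thesis
    unfolding game_payoff_def by (rule limI[OF LIMSEQ_offset])
qed

lemma hpay_stat_embed_history:
  "hpay G (stat_embed s) n h q i = hpay G (stat_embed s) n [] q i"
proof (induction n arbitrary: h q)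
  case (Suc n)
  have "(\<lambda>j. stat_embed s j h' q) = (\<lambda>j. s j q)" for h' by (simp add: stat_embed_def)
  then show ?case by (simp only: hpay.simps append_Nil Suc.IH[of "h @ _"] Suc.IH[of "[_]"])
qed simp

lemma tendsto_hpay_stat_embed:
  assumes "\<And>j q b. j \<in> players G \<Longrightarrow> q \<in> nonterm_states G \<Longrightarrow>
             (\<lambda>n. pmf (s n j q) b) \<longlonglongrightarrow> pmf (t j q) b"
  shows "(\<lambda>n. hpay G (stat_embed (s n)) k h q i) \<longlonglongrightarrow> hpay G (stat_embed t) k h q i"
proof (induction k arbitrary: h q)
  case (Suc k)
  show ?case
    using assms Suc.IH
    by (simp add: stat_embed_def) (intro impI tendsto_sum tendsto_mult tendsto_prof_prob tendsto_const)
qed simp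

lemma tendsto_game_payoff_stationary:
  assumes G: "finite_sgame G" and q: "q \<in> nonterm_states G"
    and "\<And>j q b. j \<in> players G \<Longrightarrow> q \<in> nonterm_states G \<Longrightarrow>
           (\<lambda>n. pmf (s n j q) b) \<longlonglongrightarrow> pmf (t j q) b"
  shows "(\<lambda>n. game_payoff G (stat_embed (s n)) q i) \<longlonglongrightarrow> game_payoff G (stat_embed t) q i"
proof -
  obtain T where T: "terminates_within G T q"
    using finite_sgame_horizon[OF G] q by blast
  show ?thesis
    using tendsto_hpay_stat_embed[of G s t, OF assms(3)] by (simp add: game_payoff_eq_hpay[OF G q T])
qed

lemma stationary_payoff_bellman:
  assumes G: "finite_sgame G" and q: "q \<in> nonterm_states G"
  shows "game_payoff G (stat_embed s) q i
           = stage_util G (game_payoff G (stat_embed s)) q (\<lambda>j. s j q) i"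
proof -
  obtain k where k: "terminates_within G (Suc k) q"
    using finite_sgame_horizon[OF G] q not_terminates_within_0 by (metis not0_implies_Suc)
  have q_nt: "q \<notin> term_states G" using q finite_sgame_nonterm_term_disjoint[OF G] by blast
  have succ: "hpay G (stat_embed s) k [(q, a)] q' i = game_payoff G (stat_embed s) q' i"
    if "q' \<in> nonterm_states G" "step G q q'" for q' a
    using game_payoff_eq_hpay[OF G that(1) terminates_within_step[OF k that(2,1)]]
    by (simp add: hpay_stat_embed_history[of _ _ _ "[(q, a)]"])
  have "(\<Sum>q'\<in>states G. trans G q a q' * hpay G (stat_embed s) k [(q, a)] q' i)
      = (\<Sum>q'\<in>states G. trans G q a q' * ext_val G (game_payoff G (stat_embed s)) q' i)"
    if "a \<in> profiles G" for a
    using that succ finite_sgame_nonterm_term_disjoint[OF G]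
    by (intro sum_successors_cong[OF G q]) (auto simp: hpay_term ext_val_def)
  then show ?thesis
    using game_payoff_eq_hpay[OF G q k] q q_nt
    by (simp add: stage_util_def stat_embed_def)
qed

definition value_equations ::
    "('i, 'q, 'a) sgame \<Rightarrow> ('i \<Rightarrow> 'q \<Rightarrow> 'a pmf) \<Rightarrow> ('q \<Rightarrow> 'i \<Rightarrow> real) \<Rightarrow> bool" where
  "value_equations G s V \<longleftrightarrow>
     (\<forall>q\<in>term_states G. \<forall>i. V q i = util G q i) \<and>
     (\<forall>q\<in>nonterm_states G. \<forall>i. V q i =
         (\<Sum>a\<in>profiles G. prof_prob G (\<lambda>j. s j q) a * (\<Sum>q'\<in>states G. trans G q a q' * V q' i))) \<and>
     (\<forall>q. q \<notin> states G \<longrightarrow> (\<forall>i. V q i = 0))"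

lemma value_equations_unique:
  assumes G: "finite_sgame G" and V: "value_equations G s V" and W: "value_equations G s W"
  shows "V = W"
proof (intro ext)
  fix q i
  show "V q i = W q i"
  proof (cases "q \<in> nonterm_states G")
    case True
    have "\<forall>i. V q i = W q i"
    proof (rule finite_sgame_nonterm_induct[OF G True])
      fix q assume q: "q \<in> nonterm_states G"
        and IH: "\<And>q'. step G q q' \<Longrightarrow> q' \<in> nonterm_states G \<Longrightarrow> \<forall>i. V q' i = W q' i"
      have "(\<Sum>q'\<in>states G. trans G q a q' * V q' i) = (\<Sum>q'\<in>states G. trans G q a q' * W q' i)"
        if "a \<in> profiles G" for a i
        using that V W IH by (intro sum_successors_cong[OF G q]) (auto simp: value_equations_def)
      then show "\<forall>i. V q i = W q i" using q V W by (simp add: value_equations_def)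
    qed
    then show ?thesis by blast
  next
    case False
    then show ?thesis using V W by (cases "q \<in> states G") (auto simp: value_equations_def states_def)
  qed
qed

lemma stat_value_eq_game_payoff:
  assumes G: "finite_sgame G" and q: "q \<in> nonterm_states G"
  shows "stat_value G s q i = game_payoff G (stat_embed s) q i"
proof -
  define W where "W q i = (if q \<in> states G then ext_val G (game_payoff G (stat_embed s)) q i else 0)"
    for q i
  have W_states: "W q' i = ext_val G (game_payoff G (stat_embed s)) q' i" if "q' \<in> states G" for q' i
    using that by (simp add: W_def)
  have "value_equations G s W"
    unfolding value_equations_def
  proof (intro conjI ballI allI impI)
    fix q i assume "q \<in> nonterm_states G"
    then have "W q i = stage_util G (game_payoff G (stat_embed s)) q (\<lambda>j. s j q) i"
      using stationary_payoff_bellman[OF G] ext_val_nonterm[OF G] by (simp add: W_def states_def)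
    then show "W q i = (\<Sum>a\<in>profiles G. prof_prob G (\<lambda>j. s j q) a *
                 (\<Sum>q'\<in>states G. trans G q a q' * W q' i))"
      by (simp add: stage_util_def W_states cong: sum.cong)
  qed (auto simp: W_def ext_val_def states_def)
  then have "stat_value G s = W"
    unfolding stat_value_def value_equations_def[symmetric]
    using value_equations_unique[OF G] by blast
  then show ?thesis using q by (simp add: W_def states_def ext_val_nonterm[OF G])
qed

lemma tendsto_stage_util:
  assumes "\<And>j b. j \<in> players G \<Longrightarrow> (\<lambda>n. pmf (x n j) b) \<longlonglongrightarrow> pmf (y j) b"
    and "\<And>q'. q' \<in> nonterm_states G \<Longrightarrow> (\<lambda>n. V n q' i) \<longlonglongrightarrow> W q' i"
  shows "(\<lambda>n. stage_util G (V n) q (x n) i) \<longlonglongrightarrow> stage_util G W q y i"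
proof -
  have "(\<lambda>n. ext_val G (V n) q' i) \<longlonglongrightarrow> ext_val G W q' i" if "q' \<in> states G" for q'
    using that assms(2) by (auto simp: ext_val_def states_def)
  then show ?thesis
    unfolding stage_util_def
    by (intro tendsto_sum tendsto_mult tendsto_prof_prob tendsto_const assms(1))
qed

lemma stage_nash_limit:
  assumes nash: "\<And>n. stage_nash G (V n) q (x n)"
    and x: "\<And>j b. j \<in> players G \<Longrightarrow> (\<lambda>n. pmf (x n j) b) \<longlonglongrightarrow> pmf (y j) b"
    and V: "\<And>q' i. q' \<in> nonterm_states G \<Longrightarrow> i \<in> players G \<Longrightarrow> (\<lambda>n. V n q' i) \<longlonglongrightarrow> W q' i"
    and valid: "\<And>i. i \<in> players G \<Longrightarrow> valid_mixed G i (y i)"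
  shows "stage_nash G W q y"
  unfolding stage_nash_def
proof (intro conjI ballI allI impI valid)
  fix i y' assume i: "i \<in> players G" and "valid_mixed G i y'"
  then have "stage_util G (V n) q ((x n)(i := y')) i \<le> stage_util G (V n) q (x n) i" for n
    using nash unfolding stage_nash_def by blast
  moreover have "(\<lambda>n. stage_util G (V n) q ((x n)(i := y')) i) \<longlonglongrightarrow> stage_util G W q (y(i := y')) i"
    and "(\<lambda>n. stage_util G (V n) q (x n) i) \<longlonglongrightarrow> stage_util G W q y i"
    using x V[OF _ i] by (auto intro!: tendsto_stage_util)
  ultimately show "stage_util G W q (y(i := y')) i \<le> stage_util G W q y i"
    by (intro LIMSEQ_le) auto
qed

lemma hpay_deviation_le:
  assumes G: "finite_sgame G" and \<tau>: "valid_behav G i \<tau>"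
    and no_gain: "\<And>q y. q \<in> nonterm_states G \<Longrightarrow> valid_mixed G i y \<Longrightarrow>
                    stage_util G W q ((\<lambda>j. s j q)(i := y)) i \<le> W q i"
  shows "q \<in> nonterm_states G \<Longrightarrow> terminates_within G k q \<Longrightarrow>
           hpay G ((stat_embed s)(i := \<tau>)) k h q i \<le> W q i"
proof (induction k arbitrary: q h)
  case 0
  then show ?case by (simp add: not_terminates_within_0)
next
  case (Suc k)
  let ?\<sigma> = "(stat_embed s)(i := \<tau>)"
  have "(\<lambda>j. ?\<sigma> j h q) = (\<lambda>j. s j q)(i := \<tau> h q)" by (auto simp: stat_embed_def)
  moreover have "q \<notin> term_states G"
    using Suc.prems(1) finite_sgame_nonterm_term_disjoint[OF G] by blast
  ultimately have "hpay G ?\<sigma> (Suc k) h q i =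
      (\<Sum>a\<in>profiles G. prof_prob G ((\<lambda>j. s j q)(i := \<tau> h q)) a *
         (\<Sum>q'\<in>states G. trans G q a q' * hpay G ?\<sigma> k (h @ [(q, a)]) q' i))"
    using Suc.prems(1) by simp
  also have "\<dots> \<le> stage_util G W q ((\<lambda>j. s j q)(i := \<tau> h q)) i"
    unfolding stage_util_def
  proof (rule sum_mono, rule mult_left_mono[OF _ prof_prob_nonneg])
    have succ: "hpay G ?\<sigma> k h' q' i \<le> W q' i"
      if "q' \<in> nonterm_states G" "step G q q'" for q' h'
      using Suc.IH[OF that(1) terminates_within_step[OF Suc.prems(2) that(2,1)]] .
    fix a assume "a \<in> profiles G"
    then show "(\<Sum>q'\<in>states G. trans G q a q' * hpay G ?\<sigma> k (h @ [(q, a)]) q' i)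
                 \<le> (\<Sum>q'\<in>states G. trans G q a q' * ext_val G W q' i)"
      using succ finite_sgame_nonterm_term_disjoint[OF G]
      by (intro sum_successors_mono[OF G Suc.prems(1)]) (auto simp: hpay_term ext_val_def)
  qed
  also have "\<dots> \<le> W q i"
    using no_gain Suc.prems(1) \<tau> unfolding valid_behav_def by blast
  finally show ?case .
qed

theorem one_shot_deviation_principle:
  assumes G: "finite_sgame G" and s: "stationary_profile G s"
    and nash: "\<And>q. q \<in> nonterm_states G \<Longrightarrow>
                 stage_nash G (game_payoff G (stat_embed s)) q (\<lambda>i. s i q)"
  shows "game_nash G s"
  unfolding game_nash_def
proof (intro conjI s ballI allI impI)
  fix i \<tau> q
  assume i: "i \<in> players G" and \<tau>: "valid_behav G i \<tau>" and q: "q \<in> nonterm_states G"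
  obtain T where T: "terminates_within G T q"
    using finite_sgame_horizon[OF G] q by blast
  have no_gain: "stage_util G (game_payoff G (stat_embed s)) q' ((\<lambda>j. s j q')(i := y)) i
                   \<le> game_payoff G (stat_embed s) q' i"
    if "q' \<in> nonterm_states G" "valid_mixed G i y" for q' y
    using nash[of q'] that i stationary_payoff_bellman[OF G, of q' s i]
    unfolding stage_nash_def by simp
  show "game_payoff G ((stat_embed s)(i := \<tau>)) q i \<le> game_payoff G (stat_embed s) q i"
    using hpay_deviation_le[OF G \<tau> no_gain q T] by (simp add: game_payoff_eq_hpay[OF G q T])
qed

theorem proposition1:
  fixes G :: "('i, 'q, 'a) sgame"
    and V :: "nat \<Rightarrow> 'q \<Rightarrow> 'i \<Rightarrow> real"
    and s :: "nat \<Rightarrow> 'i \<Rightarrow> 'q \<Rightarrow> 'a pmf"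
    and s_star :: "'i \<Rightarrow> 'q \<Rightarrow> 'a pmf"
  assumes game: "finite_sgame G"
    and stage: "\<And>n q. q \<in> nonterm_states G \<Longrightarrow> stage_nash G (V n) q (\<lambda>i. s (Suc n) i q)"
    and vals: "\<And>n q i. q \<in> nonterm_states G \<Longrightarrow> i \<in> players G \<Longrightarrow>
                   V (Suc n) q i = stat_value G (s (Suc n)) q i"
    and limit_stat: "stationary_profile G s_star"
    and conv: "\<And>i q a. i \<in> players G \<Longrightarrow> q \<in> nonterm_states G \<Longrightarrow>
                   (\<lambda>n. pmf (s n i q) a) \<longlonglongrightarrow> pmf (s_star i q) a"
  shows "game_nash G s_star"
proof (rule one_shot_deviation_principle[OF game limit_stat])
  have conv_shift: "(\<lambda>n. pmf (s (n + k) i q) a) \<longlonglongrightarrow> pmf (s_star i q) a"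
    if "i \<in> players G" "q \<in> nonterm_states G" for i q a k
    using LIMSEQ_ignore_initial_segment[OF conv[OF that]] .
  have V_conv: "(\<lambda>n. V (Suc n) q i) \<longlonglongrightarrow> game_payoff G (stat_embed s_star) q i"
    if "q \<in> nonterm_states G" "i \<in> players G" for q i
    using tendsto_game_payoff_stationary[OF game that(1) conv_shift[where k = 1]]
    by (simp add: vals[OF that] stat_value_eq_game_payoff[OF game that(1)])
  fix q assume q: "q \<in> nonterm_states G"
  show "stage_nash G (game_payoff G (stat_embed s_star)) q (\<lambda>i. s_star i q)"
  proof (rule stage_nash_limit)
    show "stage_nash G (V (Suc n)) q (\<lambda>i. s (Suc n + 1) i q)" for n
      using stage[OF q, of "Suc n"] by simp
  qed (use conv_shift[OF _ q, where k = 2] V_conv limit_stat q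
       in \<open>auto simp: stationary_profile_def\<close>)
qed

end
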